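(* Let $\mathscr{X},\mathscr{Y},\mathscr{Z}$ be real Banach spaces with duals $\mathscr{X}^*,\mathscr{Y}^*,\mathscr{Z}^*$, let $A:\mathscr{X}\to\mathscr{Y}$, $B:\mathscr{X}\to\mathscr{Z}$ be bounded linear operators with adjoints $A^*,B^*$, let $\mathbf{y}_0\in\mathscr{Y}$, $\rho>0$, and $p,p'\in(1,+\infty)$ with $1/p+1/p'=1$. Suppose $\hat{\mathbf{x}}\in\mathscr{X}$ satisfies $$(\|\mathbf{y}_0-A\hat{\mathbf{x}}\|^p_{\mathscr{Y}}+\rho\|B\hat{\mathbf{x}}\|^p_{\mathscr{Z}})^{1/p}=\inf\{(\|\mathbf{y}_0-A\mathbf{x}\|^p_{\mathscr{Y}}+\rho\|B\mathbf{x}\|^p_{\mathscr{Z}})^{1/p}:\mathbf{x}\in\mathscr{X}\}>0,$$ and $(\hat\lambda,\hat\mu)\in\mathscr{Y}^*\times\mathscr{Z}^*$ satisfies $(\|\hat\lambda\|^{p'}_{\mathscr{Y}^*}+\|\hat\mu\|^{p'}_{\mathscr{Z}^*})^{1/p'}=1$, $A^*\hat\lambda+\rho^{1/p}B^*\hat\mu=0$ and $$\langle\mathbf{y}_0,\hat\lambda\rangle_{\mathscr{Y}}=\sup\{|\langle\mathbf{y}_0,\lambda\rangle_{\mathscr{Y}}|:\ (\|\lambda\|^{p'}_{\mathscr{Y}^*}+\|\mu\|^{p'}_{\mathscr{Z}^*})^{1/p'}\le1,\ A^*\lambda+\rho^{1/p}B^*\mu=0\}>0.$$ Then: 1. If $\hat\mu=0$,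 then $B\hat{\mathbf{x}}=0$ and $\|\mathbf{y}_0-A\hat{\mathbf{x}}\|_{\mathscr{Y}}=\langle\mathbf{y}_0,\hat\lambda\rangle_{\mathscr{Y}}$. 2. If $\hat\lambda\neq0$ and $\hat\mu\ne0$, then $\mathbf{y}_0-A\hat{\mathbf{x}}\ne0$, $B\hat{\mathbf{x}}\neq0$, $\alpha(\mathbf{y}_0-A\hat{\mathbf{x}})$ is norming for $\hat\lambda$ and $\beta B\hat{\mathbf{x}}$ is norming for $\hat\mu$, where $\alpha:=(1+\|\hat\mu\|^{p'}_{\mathscr{Z}^*}/\|\hat\lambda\|^{p'}_{\mathscr{Y}^*})^{1/p}/\langle\mathbf{y}_0,\hat\lambda\rangle_{\mathscr{Y}}$ and $\beta:=-\rho^{1/p}(1+\|\hat\lambda\|^{p'}_{\mathscr{Y}^*}/\|\hat\mu\|^{p'}_{\mathscr{Z}^*})^{1/p}/\langle\mathbf{y}_0,\hat\lambda\rangle_{\mathscr{Y}}$.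
   Context: $\langle\mathbf{y},\lambda\rangle_{\mathscr{Y}}:=\lambda(\mathbf{y})$. For $\lambda\in\mathscr{Y}^*$, a vector $\mathbf{y}\in\mathscr{Y}$ is norming for $\lambda$ if $\|\mathbf{y}\|_{\mathscr{Y}}=1$ and $\langle\mathbf{y},\lambda\rangle_{\mathscr{Y}}=\|\lambda\|_{\mathscr{Y}^*}$; similarly for $\mathscr{Z}$. *)

theory Defs
  imports "HOL-Analysis.Analysis"
begin

(* The dual of a real normed space Y is the type of bounded linear functionals Y =>L real, with the operator norm. *)

definition dual_pair :: "'a::real_normed_vector \<Rightarrow> ('a \<Rightarrow>\<^sub>L real) \<Rightarrow> real" where
  "dual_pair y l = blinfun_apply l y"

definition adjoint_op ::
  "('a::real_normed_vector \<Rightarrow>\<^sub>L 'b::real_normed_vector) \<Rightarrow> ('b \<Rightarrow>\<^sub>L real) \<Rightarrow> ('a \<Rightarrow>\<^sub>L real)" where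
  "adjoint_op A l = l o\<^sub>L A"

definition norming :: "'a::real_normed_vector \<Rightarrow> ('a \<Rightarrow>\<^sub>L real) \<Rightarrow> bool" where
  "norming y l \<longleftrightarrow> norm y = 1 \<and> dual_pair y l = norm l"

end

theory Submission
  imports Defs
begin

(* Write c = rho^(1/p) and J x = ||(||y0 - A x||, c ||B x||)||_p. Under the constraint
   A* l + c B* m = 0 one has <y0, l> = l (y0 - A x) + c m (- B x), so Holder's inequality in R^2
   gives weak duality |<y0, l>| <= J x. Conversely, the functional t (y0, 0) - (A x, c B x) |-> t d
   with d = inf J is dominated by the l^p norm of Y x Z, and splitting a Hahn-Banach extension of it
   yields a feasible (l, m) with <y0, l> = d. Hence <y0, lh> = J xh, so every inequality in the weak
   duality chain for (lh, mh) and xh is an equality: lh and mh are aligned with y0 - A xh and - B xh,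
   and the equality case of Holder (strict weighted AM-GM) gives ||y0 - A xh|| = ||lh||^(p'/p) d and
   c ||B xh|| = ||mh||^(p'/p) d, from which both claims follow. *)

section \<open>Young's inequality and the \<open>l\<^sup>p\<close> norm on pairs\<close>

lemma Youngs_inequality_0_strict:
  fixes a b :: real
  assumes "0 < \<alpha>" "0 < \<beta>" "\<alpha> + \<beta> = 1" "a > 0" "b > 0" "a \<noteq> b"
  shows "a powr \<alpha> * b powr \<beta> < \<alpha> * a + \<beta> * b"
proof -
  define m where "m = \<alpha> * a + \<beta> * b"
  have "m > 0" using assms by (simp add: m_def add_pos_pos)
  have "m - a = m - (\<alpha> + \<beta>) * a" "m - b = m - (\<alpha> + \<beta>) * b"
    using assms(3) by simp_all
  then have "m - a = \<beta> * (b - a)" "m - b = \<alpha> * (a - b)"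
    by (simp_all add: m_def algebra_simps)
  then have "a \<noteq> m" "b \<noteq> m"
    using assms by auto
  have ln_less: "ln x < x - 1" if "x > 0" "x \<noteq> 1" for x :: real
    using that ln_le_minus_one ln_eq_minus_one by (metis order_less_le)
  have "\<alpha> * ln (a / m) + \<beta> * ln (b / m) < \<alpha> * (a / m - 1) + \<beta> * (b / m - 1)"
    using assms \<open>m > 0\<close> \<open>a \<noteq> m\<close> \<open>b \<noteq> m\<close>
    by (intro add_strict_mono mult_strict_left_mono ln_less) auto
  also have "\<dots> = (\<alpha> * a + \<beta> * b) / m - (\<alpha> + \<beta>)"
    by (simp add: add_divide_distrib algebra_simps)
  also have "\<dots> = 0"
    using assms(3) \<open>m > 0\<close> by (simp flip: m_def)
  finally have "\<alpha> * ln a + \<beta> * ln b < \<alpha> * ln m + \<beta> * ln m"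
    using assms \<open>m > 0\<close> by (simp add: ln_div algebra_simps)
  also have "\<dots> = ln m"
    by (metis assms(3) distrib_right mult_1)
  finally show ?thesis
    using assms \<open>m > 0\<close> by (simp add: m_def powr_def mult_exp_exp flip: ln_less_cancel_iff)
qed

lemma Youngs_inequality_eq:
  fixes p q a b :: real
  assumes "p > 1" "q > 1" "1/p + 1/q = 1" "a \<ge> 0" "b \<ge> 0"
    and eq: "a * b = a powr p / p + b powr q / q"
  shows "a powr p = b powr q"
proof (cases "a = 0 \<or> b = 0")
  case True
  then show ?thesis using assms by auto
next
  case False
  show ?thesis
  proof (rule ccontr)
    assume "a powr p \<noteq> b powr q"
    then have "(a powr p) powr (1/p) * (b powr q) powr (1/q) < (1/p) * a powr p + (1/q) * b powr q"
      using assms False by (intro Youngs_inequality_0_strict) auto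
    then show False
      using assms False by (simp add: powr_powr)
  qed
qed

(* Only meaningful for u, v >= 0, since powr of a negative base is junk. *)
definition lp_norm2 :: "real \<Rightarrow> real \<Rightarrow> real \<Rightarrow> real" where
  "lp_norm2 p u v = (u powr p + v powr p) powr (1 / p)"

lemma lp_norm2_nonneg [simp]: "0 \<le> lp_norm2 p u v"
  by (simp add: lp_norm2_def)

lemma lp_norm2_commute: "lp_norm2 p u v = lp_norm2 p v u"
  by (simp add: lp_norm2_def add.commute)

lemma lp_norm2_powr: "p > 0 \<Longrightarrow> lp_norm2 p u v powr p = u powr p + v powr p"
  by (simp add: lp_norm2_def powr_powr)

lemma lp_norm2_eq_0_iff:
  assumes "p > 0" "u \<ge> 0" "v \<ge> 0"
  shows "lp_norm2 p u v = 0 \<longleftrightarrow> u = 0 \<and> v = 0"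
  using assms by (simp add: lp_norm2_def add_nonneg_eq_0_iff)

lemma lp_norm2_zero_right [simp]: "p > 0 \<Longrightarrow> u \<ge> 0 \<Longrightarrow> lp_norm2 p u 0 = u"
  by (simp add: lp_norm2_def powr_powr)

lemma lp_norm2_zero_left [simp]: "p > 0 \<Longrightarrow> v \<ge> 0 \<Longrightarrow> lp_norm2 p 0 v = v"
  by (simp add: lp_norm2_def powr_powr)

lemma lp_norm2_mono:
  assumes "p > 0" "0 \<le> u" "u \<le> u'" "0 \<le> v" "v \<le> v'"
  shows "lp_norm2 p u v \<le> lp_norm2 p u' v'"
  unfolding lp_norm2_def using assms by (intro powr_mono2 add_mono) auto

lemma lp_norm2_scale:
  assumes "p > 0" "t \<ge> 0" "u \<ge> 0" "v \<ge> 0"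
  shows "lp_norm2 p (t * u) (t * v) = t * lp_norm2 p u v"
proof -
  have "(t * u) powr p + (t * v) powr p = t powr p * (u powr p + v powr p)"
    using assms by (simp add: powr_mult algebra_simps)
  then show ?thesis
    using assms by (simp add: lp_norm2_def powr_mult powr_powr)
qed

lemma lp_norm2_Holder:
  assumes "p > 1" "q > 1" "1/p + 1/q = 1" "s \<ge> 0" "t \<ge> 0" "u \<ge> 0" "v \<ge> 0"
  shows "s * u + t * v \<le> lp_norm2 q s t * lp_norm2 p u v"
proof (cases "lp_norm2 q s t = 0 \<or> lp_norm2 p u v = 0")
  case True
  then show ?thesis using assms lp_norm2_eq_0_iff[of q s t] lp_norm2_eq_0_iff[of p u v] by auto
next
  case False
  define S where "S = lp_norm2 q s t"
  define U where "U = lp_norm2 p u v"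
  have "S > 0" "U > 0" using False by (auto simp: S_def U_def less_le)
  have "(s/S) * (u/U) + (t/S) * (v/U)
      \<le> ((s/S) powr q / q + (u/U) powr p / p) + ((t/S) powr q / q + (v/U) powr p / p)"
    using assms \<open>S > 0\<close> \<open>U > 0\<close>
    by (intro add_mono Youngs_inequality) (auto simp: add.commute)
  also have "\<dots> = (s powr q + t powr q) / S powr q / q + (u powr p + v powr p) / U powr p / p"
    using assms \<open>S > 0\<close> \<open>U > 0\<close> by (simp add: powr_divide add_divide_distrib)
  also have "\<dots> = 1"
    using assms \<open>S > 0\<close> \<open>U > 0\<close>
    by (simp add: S_def U_def lp_norm2_powr[symmetric] add.commute)
  finally have "(s * u + t * v) / (S * U) \<le> 1"
    by (simp add: add_divide_distrib)
  then show ?thesis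
    using \<open>S > 0\<close> \<open>U > 0\<close> by (simp add: S_def U_def)
qed

lemma lp_norm2_Holder_eq:
  assumes "p > 1" "q > 1" "1/p + 1/q = 1" "s \<ge> 0" "t \<ge> 0" "u \<ge> 0" "v \<ge> 0"
    and "lp_norm2 q s t = 1" and "s * u + t * v = lp_norm2 p u v"
  shows "u = s powr (q / p) * lp_norm2 p u v"
proof (cases "lp_norm2 p u v = 0")
  case True
  then show ?thesis using assms lp_norm2_eq_0_iff[of p u v] by simp
next
  case False
  define D where "D = lp_norm2 p u v"
  define U where "U = u / D"
  define V where "V = v / D"
  have "D > 0" using False by (simp add: D_def less_le)
  then have "U \<ge> 0" "V \<ge> 0" using assms by (simp_all add: U_def V_def)
  have "s powr q + t powr q = 1"
    using assms lp_norm2_powr[of q s t] by simp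
  moreover have "U powr p + V powr p = 1"
  proof -
    have "u powr p + v powr p = D powr p"
      using assms by (simp add: D_def lp_norm2_powr)
    then show ?thesis
      using assms \<open>D > 0\<close> by (simp add: U_def V_def powr_divide add_divide_distrib[symmetric])
  qed
  moreover have "s * U + t * V = 1"
    using assms \<open>D > 0\<close> by (simp add: U_def V_def D_def add_divide_distrib[symmetric])
  moreover have "U * s \<le> U powr p / p + s powr q / q" "V * t \<le> V powr p / p + t powr q / q"
    using assms \<open>U \<ge> 0\<close> \<open>V \<ge> 0\<close> by (simp_all add: Youngs_inequality)
  moreover have "(U powr p / p + s powr q / q) + (V powr p / p + t powr q / q) = 1"
    using calculation(1,2) assms(3)
    by (simp add: add_divide_distrib[symmetric] add.commute add.left_commute)
  ultimately have "U * s = U powr p / p + s powr q / q"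
    by (simp add: mult.commute)
  then have "U powr p = s powr q"
    using assms \<open>D > 0\<close> by (intro Youngs_inequality_eq) (auto simp: U_def)
  moreover have "U = (U powr p) powr (1 / p)"
    using \<open>U \<ge> 0\<close> assms by (simp add: powr_powr)
  ultimately have "U = s powr (q / p)"
    by (simp add: powr_powr)
  then show ?thesis
    using \<open>D > 0\<close> by (simp add: U_def D_def field_simps)
qed

lemma lp_norm2_Holder_sharp:
  assumes "p > 1" "q > 1" "1/p + 1/q = 1" "u \<ge> 0" "v \<ge> 0"
  obtains s t where "s \<ge> 0" "t \<ge> 0" "lp_norm2 q s t = 1" "s * u + t * v = lp_norm2 p u v"
proof (cases "lp_norm2 p u v = 0")
  case True
  then show ?thesis
    using assms lp_norm2_eq_0_iff[of p u v] by (intro that[of 1 0]) auto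
next
  case False
  define D where "D = lp_norm2 p u v"
  have "D > 0" using False by (simp add: D_def less_le)
  have Dp: "u powr p + v powr p = D powr p"
    using assms by (simp add: D_def lp_norm2_powr)
  have "(p - 1) * q = p"
    using assms by (simp add: field_simps)
  have mult_self: "x powr (p - 1) * x = x powr p" if "x \<ge> 0" for x :: real
    using that powr_add[of x "p - 1" 1] by simp
  define s where "s = (u / D) powr (p - 1)"
  define t where "t = (v / D) powr (p - 1)"
  have "s powr q + t powr q = (u powr p + v powr p) / D powr p"
    using assms \<open>D > 0\<close> \<open>(p - 1) * q = p\<close>
    by (simp add: s_def t_def powr_powr powr_divide add_divide_distrib)
  then have "lp_norm2 q s t = 1"
    using \<open>D > 0\<close> by (simp add: lp_norm2_def Dp)
  moreover have "s * u = D * (u / D) powr p" "t * v = D * (v / D) powr p"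
    using assms \<open>D > 0\<close> mult_self[of "u / D"] mult_self[of "v / D"]
    by (simp_all add: s_def t_def field_simps)
  then have "s * u + t * v = D * (u powr p + v powr p) / D powr p"
    using assms \<open>D > 0\<close> by (simp add: powr_divide add_divide_distrib distrib_left)
  then have "s * u + t * v = D"
    using \<open>D > 0\<close> by (simp add: Dp)
  ultimately show ?thesis
    using assms by (intro that[of s t]) (auto simp: s_def t_def D_def)
qed

lemma lp_norm2_triangle:
  assumes "p > 1" "u1 \<ge> 0" "u2 \<ge> 0" "v1 \<ge> 0" "v2 \<ge> 0"
  shows "lp_norm2 p (u1 + u2) (v1 + v2) \<le> lp_norm2 p u1 v1 + lp_norm2 p u2 v2"
proof -
  define q where "q = p / (p - 1)"
  have q: "q > 1" "1/p + 1/q = 1"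
    using assms by (auto simp: q_def field_simps)
  obtain s t where st: "s \<ge> 0" "t \<ge> 0" "lp_norm2 q s t = 1"
    and "s * (u1 + u2) + t * (v1 + v2) = lp_norm2 p (u1 + u2) (v1 + v2)"
    using lp_norm2_Holder_sharp[of p q "u1 + u2" "v1 + v2"] assms q by auto
  moreover have "s * u1 + t * v1 \<le> lp_norm2 p u1 v1" "s * u2 + t * v2 \<le> lp_norm2 p u2 v2"
    using lp_norm2_Holder[of p q s t] assms q st by (metis mult_1)+
  ultimately show ?thesis
    by (simp add: algebra_simps)
qed

lemma lp_norm2_le_1_if_dual:
  assumes "p > 1" "q > 1" "1/p + 1/q = 1" "a \<ge> 0" "b \<ge> 0"
    and "\<And>s t. s \<ge> 0 \<Longrightarrow> t \<ge> 0 \<Longrightarrow> s * a + t * b \<le> lp_norm2 p s t"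
  shows "lp_norm2 q a b \<le> 1"
proof -
  obtain s t where "s \<ge> 0" "t \<ge> 0" "lp_norm2 p s t = 1" "s * a + t * b = lp_norm2 q a b"
    using lp_norm2_Holder_sharp[of q p a b] assms by (auto simp: add.commute)
  then show ?thesis
    using assms(6) by metis
qed

section \<open>Hahn--Banach\<close>

definition sublinear :: "('a::real_vector \<Rightarrow> real) \<Rightarrow> bool" where
  "sublinear q \<longleftrightarrow> (\<forall>x y. q (x + y) \<le> q x + q y) \<and> (\<forall>t x. t \<ge> 0 \<longrightarrow> q (t *\<^sub>R x) = t * q x)"

lemma sublinear_add: "sublinear q \<Longrightarrow> q (x + y) \<le> q x + q y"
  by (simp add: sublinear_def)

lemma sublinear_scaleR: "sublinear q \<Longrightarrow> t \<ge> 0 \<Longrightarrow> q (t *\<^sub>R x) = t * q x"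
  by (simp add: sublinear_def)

lemma sublinear_0: "sublinear q \<Longrightarrow> q 0 = 0"
  using sublinear_scaleR[of q 0 0] by simp

lemma subspace_Union_chain:
  assumes "C \<noteq> {}" "\<And>S. S \<in> C \<Longrightarrow> subspace S"
    and "\<And>S T. S \<in> C \<Longrightarrow> T \<in> C \<Longrightarrow> S \<subseteq> T \<or> T \<subseteq> S"
  shows "subspace (\<Union>C)"
  unfolding subspace_def
proof (intro conjI ballI allI)
  show "0 \<in> \<Union>C"
    using assms(1,2) subspace_0 by blast
next
  fix x y assume "x \<in> \<Union>C" "y \<in> \<Union>C"
  then obtain S where "S \<in> C" "x \<in> S" "y \<in> S"
    using assms(3) by blast
  then show "x + y \<in> \<Union>C"
    using assms(2) subspace_add by blast
next
  fix c x assume "x \<in> \<Union>C"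
  then show "c *\<^sub>R x \<in> \<Union>C"
    using assms(2) subspace_scale by blast
qed

lemma dominated_subspace_graph_unique:
  assumes "sublinear q" "subspace G" "\<And>x a. (x, a) \<in> G \<Longrightarrow> a \<le> q x"
    and "(x, a) \<in> G" "(x, b) \<in> G"
  shows "a = b"
proof -
  have "(x, a) - (x, b) \<in> G" "(x, b) - (x, a) \<in> G"
    using subspace_diff[OF assms(2)] assms(4,5) by blast+
  then have "(0, a - b) \<in> G" "(0, b - a) \<in> G"
    by simp_all
  then have "a - b \<le> 0" "b - a \<le> 0"
    using assms(3) sublinear_0[OF assms(1)] by fastforce+
  then show ?thesis by simp
qed

(* The value c at the new direction x0 has to lie between a - q (x - x0) and q (z + x0) - b for all
   (x, a), (z, b) in G, and sublinearity makes each such lower bound at most each upper bound. *)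
lemma dominated_extension_value:
  assumes "sublinear q" "subspace G" "\<And>x a. (x, a) \<in> G \<Longrightarrow> a \<le> q x"
  obtains c where "\<And>x a k. (x, a) \<in> G \<Longrightarrow> a + k * c \<le> q (x + k *\<^sub>R x0)"
proof -
  have bound: "a - q (x - x0) \<le> q (z + x0) - b" if "(x, a) \<in> G" "(z, b) \<in> G" for x a z b
  proof -
    have "a + b \<le> q (x + z)"
      using assms(3) subspace_add[OF assms(2) that] by simp
    also have "\<dots> \<le> q (x - x0) + q (z + x0)"
      using sublinear_add[OF assms(1), of "x - x0" "z + x0"] by simp
    finally show ?thesis by simp
  qed
  define L where "L = {a - q (x - x0) | x a. (x, a) \<in> G}"
  define c where "c = Sup L"
  have "(0, 0) \<in> G"
    using subspace_0[OF assms(2)] by (simp add: zero_prod_def)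
  then have L: "L \<noteq> {}" "bdd_above L"
    using bound unfolding L_def bdd_above_def by blast+
  have c_lower: "a - q (x - x0) \<le> c" if "(x, a) \<in> G" for x a
    unfolding c_def using L that by (intro cSup_upper) (auto simp: L_def)
  have c_upper: "c \<le> q (z + x0) - b" if "(z, b) \<in> G" for z b
    unfolding c_def using L bound that by (intro cSup_least) (auto simp: L_def)
  have "a + k * c \<le> q (x + k *\<^sub>R x0)" if xa: "(x, a) \<in> G" for x a k
  proof (cases k "0 :: real" rule: linorder_cases)
    case equal
    then show ?thesis using assms(3) xa by simp
  next
    case greater
    have "((1 / k) *\<^sub>R x, (1 / k) * a) \<in> G"
      using subspace_scale[OF assms(2) xa, of "1 / k"] by simp
    then have "k * c \<le> k * (q ((1 / k) *\<^sub>R x + x0) - (1 / k) * a)"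
      using greater c_upper by simp
    also have "\<dots> = q (x + k *\<^sub>R x0) - a"
      using greater sublinear_scaleR[OF assms(1), of k "(1 / k) *\<^sub>R x + x0"]
      by (simp add: algebra_simps)
    finally show ?thesis by simp
  next
    case less
    have "((- 1 / k) *\<^sub>R x, (- 1 / k) * a) \<in> G"
      using subspace_scale[OF assms(2) xa, of "- 1 / k"] by simp
    then have "- k * ((- 1 / k) * a - q ((- 1 / k) *\<^sub>R x - x0)) \<le> - k * c"
      using less c_lower by simp
    also have "- k * ((- 1 / k) * a - q ((- 1 / k) *\<^sub>R x - x0)) = a - q (x + k *\<^sub>R x0)"
      using less sublinear_scaleR[OF assms(1), of "- k" "(- 1 / k) *\<^sub>R x - x0"]
      by (simp add: algebra_simps)
    finally show ?thesis by simp
  qed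
  then show ?thesis using that by blast
qed

lemma dominated_subspace_extend:
  assumes "sublinear q" "subspace G" "\<And>x a. (x, a) \<in> G \<Longrightarrow> a \<le> q x"
  obtains G' c where "subspace G'" "G \<subseteq> G'" "\<And>x a. (x, a) \<in> G' \<Longrightarrow> a \<le> q x" "(x0, c) \<in> G'"
proof -
  obtain c where c: "\<And>x a k. (x, a) \<in> G \<Longrightarrow> a + k * c \<le> q (x + k *\<^sub>R x0)"
    using dominated_extension_value[OF assms] by blast
  define G' where "G' = {g + h | g h. g \<in> G \<and> h \<in> span {(x0, c)}}"
  have "subspace G'"
    unfolding G'_def using \<open>subspace G\<close> by (intro subspace_sums) auto
  moreover have "G \<subseteq> G'"
  proof
    fix g assume "g \<in> G"
    then have "g = g + 0 \<and> g \<in> G \<and> 0 \<in> span {(x0, c)}"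
      by (simp add: span_zero)
    then show "g \<in> G'"
      unfolding G'_def by blast
  qed
  moreover have "a \<le> q x" if xa: "(x, a) \<in> G'" for x a
  proof -
    obtain g k where "g \<in> G" "(x, a) = g + k *\<^sub>R (x0, c)"
      using xa unfolding G'_def span_singleton by blast
    then show ?thesis
      using c[of "fst g" "snd g" k] by (cases g) auto
  qed
  moreover have "(x0, c) = 0 + (x0, c) \<and> 0 \<in> G \<and> (x0, c) \<in> span {(x0, c)}"
    using subspace_0[OF \<open>subspace G\<close>] by (simp add: span_base)
  then have "(x0, c) \<in> G'"
    unfolding G'_def by blast
  ultimately show ?thesis
    using that by blast
qed

(* A linear functional on a subspace is represented by its graph in V x real; domination by a
   sublinear q already forces a subspace graph to be single-valued. *)
theorem Hahn_Banach_graph: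
  fixes q :: "'v::real_vector \<Rightarrow> real"
  assumes "sublinear q" "subspace G0" "\<And>x a. (x, a) \<in> G0 \<Longrightarrow> a \<le> q x"
  obtains F where "linear F" "\<And>x a. (x, a) \<in> G0 \<Longrightarrow> F x = a" "\<And>x. F x \<le> q x"
proof -
  define \<A> where "\<A> = {G. subspace G \<and> G0 \<subseteq> G \<and> (\<forall>(x, a) \<in> G. a \<le> q x)}"
  have "\<exists>G\<in>\<A>. \<forall>G'\<in>\<A>. G \<subseteq> G' \<longrightarrow> G' = G"
  proof (rule subset_Zorn_nonempty)
    show "\<A> \<noteq> {}"
      using assms unfolding \<A>_def by blast
  next
    fix C assume "C \<noteq> {}" "subset.chain \<A> C"
    then have "subspace (\<Union>C)"
      by (intro subspace_Union_chain) (auto simp: \<A>_def subset_chain_def)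
    then show "\<Union>C \<in> \<A>"
      using \<open>C \<noteq> {}\<close> \<open>subset.chain \<A> C\<close> unfolding \<A>_def subset_chain_def by blast
  qed
  then obtain G where "G \<in> \<A>" and G_max: "\<And>G'. G' \<in> \<A> \<Longrightarrow> G \<subseteq> G' \<Longrightarrow> G' = G"
    by blast
  then have "subspace G" "G0 \<subseteq> G" and G_dom: "\<And>x a. (x, a) \<in> G \<Longrightarrow> a \<le> q x"
    unfolding \<A>_def by auto
  have G_total: "\<exists>a. (x0, a) \<in> G" for x0
  proof -
    obtain G' c where "subspace G'" "G \<subseteq> G'" "\<And>x a. (x, a) \<in> G' \<Longrightarrow> a \<le> q x" "(x0, c) \<in> G'"
      using dominated_subspace_extend[OF assms(1) \<open>subspace G\<close> G_dom] by blast
    then show ?thesis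
      using G_max[of G'] \<open>G0 \<subseteq> G\<close> unfolding \<A>_def by blast
  qed
  define F where "F x = (SOME a. (x, a) \<in> G)" for x
  have F_graph: "(x, F x) \<in> G" for x
    unfolding F_def using G_total by (rule someI_ex)
  have F_eq: "F x = a" if "(x, a) \<in> G" for x a
    using dominated_subspace_graph_unique[OF assms(1) \<open>subspace G\<close> G_dom F_graph that] .
  have "linear F"
  proof
    show "F (x + y) = F x + F y" for x y
      using F_eq subspace_add[OF \<open>subspace G\<close> F_graph F_graph] by simp
    show "F (c *\<^sub>R x) = c *\<^sub>R F x" for c x
      using F_eq subspace_scale[OF \<open>subspace G\<close> F_graph] by simp
  qed
  then show ?thesis
    using that F_eq G_dom F_graph \<open>G0 \<subseteq> G\<close> by blast
qed

section \<open>Duality for the regularised least-norm problem\<close>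

lemma norm_blinfun_le_if_unit_ball:
  fixes f :: "'a::real_normed_vector \<Rightarrow>\<^sub>L real"
  assumes bound: "\<And>y. norm y \<le> 1 \<Longrightarrow> f y \<le> K"
  shows "norm f \<le> K"
proof (rule norm_blinfun_bound)
  show "0 \<le> K"
    using bound[of 0] by simp
  show "norm (f x) \<le> K * norm x" for x
  proof (cases "x = 0")
    case False
    define y where "y = (1 / norm x) *\<^sub>R x"
    have "norm y = 1" "norm (- y) = 1"
      using False by (simp_all add: y_def)
    then have "\<bar>f y\<bar> \<le> K"
      using bound[of y] bound[of "- y"] by (simp add: blinfun.minus_right)
    moreover have "f x = norm x * f y"
      using False by (simp add: y_def blinfun.scaleR_right)
    ultimately show ?thesis
      by (simp add: abs_mult) (metis mult.commute mult_left_mono norm_ge_zero)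
  qed simp
qed

lemma norm_blinfun_add_le:
  fixes f :: "'a::real_normed_vector \<Rightarrow>\<^sub>L real" and g :: "'b::real_normed_vector \<Rightarrow>\<^sub>L real"
  assumes "\<And>y z. norm y \<le> 1 \<Longrightarrow> norm z \<le> 1 \<Longrightarrow> f y + g z \<le> K"
  shows "norm f + norm g \<le> K"
proof -
  have "norm g \<le> K - f y" if "norm y \<le> 1" for y
    using assms that by (intro norm_blinfun_le_if_unit_ball) (simp add: algebra_simps)
  then have "norm f \<le> K - norm g"
    by (intro norm_blinfun_le_if_unit_ball) (simp add: algebra_simps)
  then show ?thesis by simp
qed

lemma sublinear_lp_norm2_product:
  assumes "p > 1"
  shows "sublinear (\<lambda>(y, z). lp_norm2 p (norm y) (norm z))"
  unfolding sublinear_def case_prod_beta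
proof (intro conjI allI impI)
  fix w w' :: "'a::real_normed_vector \<times> 'b::real_normed_vector"
  have "lp_norm2 p (norm (fst (w + w'))) (norm (snd (w + w')))
      \<le> lp_norm2 p (norm (fst w) + norm (fst w')) (norm (snd w) + norm (snd w'))"
    using assms by (intro lp_norm2_mono) (auto intro: norm_triangle_ineq)
  also have "\<dots> \<le> lp_norm2 p (norm (fst w)) (norm (snd w)) + lp_norm2 p (norm (fst w')) (norm (snd w'))"
    using assms by (intro lp_norm2_triangle) auto
  finally show "lp_norm2 p (norm (fst (w + w'))) (norm (snd (w + w')))
      \<le> lp_norm2 p (norm (fst w)) (norm (snd w)) + lp_norm2 p (norm (fst w')) (norm (snd w'))" .
next
  fix t :: real and w :: "'a \<times> 'b"
  assume "t \<ge> 0"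
  then show "lp_norm2 p (norm (fst (t *\<^sub>R w))) (norm (snd (t *\<^sub>R w)))
      = t * lp_norm2 p (norm (fst w)) (norm (snd w))"
    using assms lp_norm2_scale[of p t] by simp
qed

lemma lp_norm2_dual_norms_le_1:
  fixes l :: "'y::real_normed_vector \<Rightarrow>\<^sub>L real" and m :: "'z::real_normed_vector \<Rightarrow>\<^sub>L real"
  assumes "p > 1" "q > 1" "1/p + 1/q = 1"
    and lm_le: "\<And>y z. l y + m z \<le> lp_norm2 p (norm y) (norm z)"
  shows "lp_norm2 q (norm l) (norm m) \<le> 1"
proof (rule lp_norm2_le_1_if_dual[OF assms(1-3)])
  fix s t :: real assume "s \<ge> 0" "t \<ge> 0"
  have "(s *\<^sub>R l) y + (t *\<^sub>R m) z \<le> lp_norm2 p s t" if "norm y \<le> 1" "norm z \<le> 1" for y z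
  proof -
    have "(s *\<^sub>R l) y + (t *\<^sub>R m) z \<le> lp_norm2 p (s * norm y) (t * norm z)"
      using lm_le[of "s *\<^sub>R y" "t *\<^sub>R z"] \<open>s \<ge> 0\<close> \<open>t \<ge> 0\<close>
      by (simp add: blinfun.scaleR_left blinfun.scaleR_right)
    also have "\<dots> \<le> lp_norm2 p s t"
      using assms(1) \<open>s \<ge> 0\<close> \<open>t \<ge> 0\<close> that by (intro lp_norm2_mono) (auto intro: mult_left_le)
    finally show ?thesis .
  qed
  then have "norm (s *\<^sub>R l) + norm (t *\<^sub>R m) \<le> lp_norm2 p s t"
    by (rule norm_blinfun_add_le)
  then show "s * norm l + t * norm m \<le> lp_norm2 p s t"
    using \<open>s \<ge> 0\<close> \<open>t \<ge> 0\<close> by simp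
qed auto

lemma linear_functional_on_lp_product:
  fixes F :: "'y::real_normed_vector \<times> 'z::real_normed_vector \<Rightarrow> real"
  assumes "p > 1" "q > 1" "1/p + 1/q = 1" "linear F"
    and F_le: "\<And>y z. F (y, z) \<le> lp_norm2 p (norm y) (norm z)"
  obtains l :: "'y \<Rightarrow>\<^sub>L real" and m :: "'z \<Rightarrow>\<^sub>L real"
  where "\<And>y z. F (y, z) = l y + m z" "lp_norm2 q (norm l) (norm m) \<le> 1"
proof -
  have F_abs: "\<bar>F (y, z)\<bar> \<le> lp_norm2 p (norm y) (norm z)" for y z
    using F_le[of y z] F_le[of "- y" "- z"] linear_neg[OF \<open>linear F\<close>, of "(y, z)"] by simp
  have "bounded_linear (\<lambda>y. F (y, 0))"
  proof (rule bounded_linear_intro[where K = 1])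
    show "F (y + y', 0) = F (y, 0) + F (y', 0)" for y y'
      using linear_add[OF \<open>linear F\<close>, of "(y, 0)" "(y', 0)"] by simp
    show "F (r *\<^sub>R y, 0) = r *\<^sub>R F (y, 0)" for r y
      using linear_scale[OF \<open>linear F\<close>, of r "(y, 0)"] by simp
    show "norm (F (y, 0)) \<le> norm y * 1" for y
      using F_abs[of y 0] assms(1) by simp
  qed
  moreover have "bounded_linear (\<lambda>z. F (0, z))"
  proof (rule bounded_linear_intro[where K = 1])
    show "F (0, z + z') = F (0, z) + F (0, z')" for z z'
      using linear_add[OF \<open>linear F\<close>, of "(0, z)" "(0, z')"] by simp
    show "F (0, r *\<^sub>R z) = r *\<^sub>R F (0, z)" for r z
      using linear_scale[OF \<open>linear F\<close>, of r "(0, z)"] by simp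
    show "norm (F (0, z)) \<le> norm z * 1" for z
      using F_abs[of 0 z] assms(1) by simp
  qed
  ultimately obtain l :: "'y \<Rightarrow>\<^sub>L real" and m :: "'z \<Rightarrow>\<^sub>L real"
    where l: "\<And>y. l y = F (y, 0)" and m: "\<And>z. m z = F (0, z)"
    by (metis bounded_linear_Blinfun_apply)
  have F_split: "F (y, z) = l y + m z" for y z
    using linear_add[OF \<open>linear F\<close>, of "(y, 0)" "(0, z)"] by (simp add: l m)
  have "l y + m z \<le> lp_norm2 p (norm y) (norm z)" for y z
    using F_le F_split by metis
  then have "lp_norm2 q (norm l) (norm m) \<le> 1"
    by (rule lp_norm2_dual_norms_le_1[OF assms(1-3)])
  then show ?thesis
    using that F_split by blast
qed

lemma adjoint_constraint_dual_pair:
  assumes "adjoint_op A l + c *\<^sub>R adjoint_op B m = 0"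
  shows "dual_pair y0 l = l (y0 - A x) - c * m (B x)"
proof -
  have "l (A x) + c * m (B x) = 0"
    using arg_cong[OF assms, of "\<lambda>F. blinfun_apply F x"]
    by (simp add: adjoint_op_def blinfun.add_left blinfun.scaleR_left)
  then show ?thesis
    by (simp add: dual_pair_def blinfun.diff_right)
qed

lemma adjoint_constraint_uminus:
  assumes "adjoint_op A l + c *\<^sub>R adjoint_op B m = 0"
  shows "adjoint_op A (- l) + c *\<^sub>R adjoint_op B (- m) = 0"
proof -
  have "adjoint_op A (- l) + c *\<^sub>R adjoint_op B (- m) = - (adjoint_op A l + c *\<^sub>R adjoint_op B m)"
    by (rule blinfun_eqI)
      (simp add: adjoint_op_def blinfun.add_left blinfun.diff_left blinfun.scaleR_left blinfun.minus_left)
  then show ?thesis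
    using assms by simp
qed

lemma weak_duality:
  fixes A :: "'x::real_normed_vector \<Rightarrow>\<^sub>L 'y::real_normed_vector"
    and B :: "'x \<Rightarrow>\<^sub>L 'z::real_normed_vector"
  assumes "p > 1" "q > 1" "1/p + 1/q = 1" "c \<ge> 0"
    and "lp_norm2 q (norm l) (norm m) \<le> 1" "adjoint_op A l + c *\<^sub>R adjoint_op B m = 0"
  shows "\<bar>dual_pair y0 l\<bar> \<le> lp_norm2 p (norm (y0 - A x)) (c * norm (B x))"
proof -
  have bound: "dual_pair y0 l' \<le> lp_norm2 p (norm (y0 - A x)) (c * norm (B x))"
    if "norm l' = norm l" "norm m' = norm m" "adjoint_op A l' + c *\<^sub>R adjoint_op B m' = 0" for l' m'
  proof -
    have "dual_pair y0 l' = l' (y0 - A x) + c * m' (- B x)"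
      using adjoint_constraint_dual_pair[OF that(3)] by (simp add: blinfun.minus_right)
    also have "\<dots> \<le> norm l * norm (y0 - A x) + norm m * (c * norm (B x))"
      using assms(4) that norm_blinfun[of l' "y0 - A x"] norm_blinfun[of m' "- B x"]
      by (intro add_mono) (auto simp: mult_left_mono mult.left_commute)
    also have "\<dots> \<le> lp_norm2 q (norm l) (norm m) * lp_norm2 p (norm (y0 - A x)) (c * norm (B x))"
      using assms by (intro lp_norm2_Holder) auto
    also have "\<dots> \<le> lp_norm2 p (norm (y0 - A x)) (c * norm (B x))"
      using assms(5) by (simp add: mult_left_le_one_le)
    finally show ?thesis .
  qed
  show ?thesis
    using bound[of l m] bound[of "- l" "- m"] assms(6) adjoint_constraint_uminus[OF assms(6)]
    by (simp add: dual_pair_def blinfun.minus_left abs_le_iff)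
qed

lemma primal_bound_homogeneous:
  fixes A :: "'x::real_normed_vector \<Rightarrow>\<^sub>L 'y::real_normed_vector"
    and B :: "'x \<Rightarrow>\<^sub>L 'z::real_normed_vector"
  assumes "p > 1" "c \<ge> 0" "d \<ge> 0"
    and d_le: "\<And>x. d \<le> lp_norm2 p (norm (y0 - A x)) (c * norm (B x))"
  shows "t * d \<le> lp_norm2 p (norm (t *\<^sub>R y0 - A x)) (norm (c *\<^sub>R B x))"
proof (cases "t > 0")
  case True
  define x' where "x' = (1 / t) *\<^sub>R x"
  have "t *\<^sub>R y0 - A x = t *\<^sub>R (y0 - A x')" "c *\<^sub>R B x = t *\<^sub>R (c *\<^sub>R B x')"
    using True by (simp_all add: x'_def blinfun.scaleR_right algebra_simps)
  then have "lp_norm2 p (norm (t *\<^sub>R y0 - A x)) (norm (c *\<^sub>R B x))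
      = t * lp_norm2 p (norm (y0 - A x')) (c * norm (B x'))"
    using True assms(1,2) lp_norm2_scale[of p t "norm (y0 - A x')" "c * norm (B x')"]
    by (simp add: mult.assoc)
  then show ?thesis
    using True d_le[of x'] by simp
next
  case False
  then have "t * d \<le> 0"
    using assms(3) by (simp add: mult_nonpos_nonneg)
  then show ?thesis
    using lp_norm2_nonneg order_trans by blast
qed

lemma strong_duality:
  fixes A :: "'x::real_normed_vector \<Rightarrow>\<^sub>L 'y::real_normed_vector"
    and B :: "'x \<Rightarrow>\<^sub>L 'z::real_normed_vector"
  assumes "p > 1" "q > 1" "1/p + 1/q = 1" "c \<ge> 0" "d \<ge> 0"
    and d_le: "\<And>x. d \<le> lp_norm2 p (norm (y0 - A x)) (c * norm (B x))"
  obtains l m where "lp_norm2 q (norm l) (norm m) \<le> 1"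
    "adjoint_op A l + c *\<^sub>R adjoint_op B m = 0" "dual_pair y0 l = d"
proof -
  define N :: "'y \<times> 'z \<Rightarrow> real" where "N = (\<lambda>(y, z). lp_norm2 p (norm y) (norm z))"
  define \<phi> where "\<phi> = (\<lambda>(t, x). (t *\<^sub>R (y0, 0) - (A x, c *\<^sub>R B x), t * d))"
  have "linear \<phi>"
    by (rule linearI)
      (auto simp: \<phi>_def blinfun.add_right blinfun.scaleR_right algebra_simps)
  then have "subspace (range \<phi>)"
    by (metis linear_subspace_image subspace_UNIV)
  moreover have "a \<le> N w" if "(w, a) \<in> range \<phi>" for w a
    using that primal_bound_homogeneous[OF assms(1,4,5) d_le] by (auto simp: \<phi>_def N_def)
  ultimately obtain F where "linear F" and F_\<phi>: "\<And>w a. (w, a) \<in> range \<phi> \<Longrightarrow> F w = a"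
    and F_le: "\<And>w. F w \<le> N w"
    using Hahn_Banach_graph[of N "range \<phi>"] sublinear_lp_norm2_product[OF assms(1)]
    unfolding N_def by blast
  obtain l :: "'y \<Rightarrow>\<^sub>L real" and m :: "'z \<Rightarrow>\<^sub>L real"
    where F_split: "\<And>y z. F (y, z) = l y + m z" and "lp_norm2 q (norm l) (norm m) \<le> 1"
    using linear_functional_on_lp_product[OF assms(1-3) \<open>linear F\<close>] F_le unfolding N_def by auto
  moreover have "adjoint_op A l + c *\<^sub>R adjoint_op B m = 0"
  proof (rule blinfun_eqI)
    fix x
    have "\<phi> (0, x) = (- (A x, c *\<^sub>R B x), 0)"
      by (simp add: \<phi>_def)
    then have "F (- (A x, c *\<^sub>R B x)) = 0"
      by (metis F_\<phi> rangeI)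
    then show "blinfun_apply (adjoint_op A l + c *\<^sub>R adjoint_op B m) x = blinfun_apply 0 x"
      by (simp add: adjoint_op_def F_split blinfun.add_left blinfun.scaleR_left
          blinfun.scaleR_right blinfun.minus_right)
  qed
  moreover have "\<phi> (1, 0) = ((y0, 0), d)"
    by (simp add: \<phi>_def)
  then have "F (y0, 0) = d"
    by (metis F_\<phi> rangeI)
  then have "dual_pair y0 l = d"
    using F_split[of y0 0] by (simp add: dual_pair_def)
  ultimately show ?thesis
    using that by blast
qed

lemma Sup_dual_eq_Inf_primal:
  fixes A :: "'x::real_normed_vector \<Rightarrow>\<^sub>L 'y::real_normed_vector"
    and B :: "'x \<Rightarrow>\<^sub>L 'z::real_normed_vector"
  assumes "p > 1" "q > 1" "1/p + 1/q = 1" "c \<ge> 0"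
  shows "Sup {\<bar>dual_pair y0 l\<bar> | l m.
            lp_norm2 q (norm l) (norm m) \<le> 1 \<and> adjoint_op A l + c *\<^sub>R adjoint_op B m = 0}
       = (INF x. lp_norm2 p (norm (y0 - A x)) (c * norm (B x)))"
    (is "Sup ?D = (INF x. ?J x)")
proof (rule cSup_eq_maximum)
  have "bdd_below (range ?J)"
    by (intro bdd_belowI[of _ 0]) auto
  then have J_ge: "(INF x. ?J x) \<le> ?J x" for x
    by (rule cINF_lower) simp
  have "(INF x. ?J x) \<ge> 0"
    by (intro cINF_greatest) auto
  moreover obtain l m where "lp_norm2 q (norm l) (norm m) \<le> 1"
      "adjoint_op A l + c *\<^sub>R adjoint_op B m = 0" "dual_pair y0 l = (INF x. ?J x)"
    using strong_duality[OF assms calculation J_ge] .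
  ultimately show "(INF x. ?J x) \<in> ?D"
    by (metis (mono_tags, lifting) abs_of_nonneg mem_Collect_eq)
next
  fix s assume "s \<in> ?D"
  then show "s \<le> (INF x. ?J x)"
    using weak_duality[OF assms] by (intro cINF_greatest) auto
qed

(* At an optimal pair every inequality of the weak duality chain becomes an equality. *)
lemma optimal_dual_alignment:
  fixes A :: "'x::real_normed_vector \<Rightarrow>\<^sub>L 'y::real_normed_vector"
    and B :: "'x \<Rightarrow>\<^sub>L 'z::real_normed_vector"
  assumes "p > 1" "q > 1" "1/p + 1/q = 1" "c > 0"
    and "adjoint_op A l + c *\<^sub>R adjoint_op B m = 0" "lp_norm2 q (norm l) (norm m) = 1"
    and opt: "dual_pair y0 l = lp_norm2 p (norm (y0 - A x)) (c * norm (B x))"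
  shows "l (y0 - A x) = norm l * norm (y0 - A x)" "m (- B x) = norm m * norm (B x)"
    and "norm (y0 - A x) = norm l powr (q / p) * dual_pair y0 l"
    and "c * norm (B x) = norm m powr (q / p) * dual_pair y0 l"
proof -
  define u v where "u = norm (y0 - A x)" and "v = c * norm (B x)"
  have "u \<ge> 0" "v \<ge> 0"
    using assms(4) by (simp_all add: u_def v_def)
  have l_le: "l (y0 - A x) \<le> norm l * u"
    using norm_blinfun[of l "y0 - A x"] by (simp add: u_def)
  have m_le: "c * m (- B x) \<le> norm m * v"
    using assms(4) norm_blinfun[of m "- B x"] by (simp add: v_def mult_left_mono mult.left_commute)
  have "dual_pair y0 l = lp_norm2 p u v"
    using opt by (simp add: u_def v_def)
  moreover have "dual_pair y0 l = l (y0 - A x) + c * m (- B x)"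
    using adjoint_constraint_dual_pair[OF assms(5)] by (simp add: blinfun.minus_right)
  moreover have "norm l * u + norm m * v \<le> lp_norm2 p u v"
    using lp_norm2_Holder[of p q "norm l" "norm m" u v] assms \<open>u \<ge> 0\<close> \<open>v \<ge> 0\<close> by simp
  ultimately have eqs: "l (y0 - A x) = norm l * u" "c * m (- B x) = norm m * v"
    and sum: "norm l * u + norm m * v = lp_norm2 p u v"
    using l_le m_le by linarith+
  show "l (y0 - A x) = norm l * norm (y0 - A x)"
    using eqs(1) by (simp add: u_def)
  show "m (- B x) = norm m * norm (B x)"
    using eqs(2) assms(4) by (simp add: v_def)
  show "norm (y0 - A x) = norm l powr (q / p) * dual_pair y0 l"
    using lp_norm2_Holder_eq[of p q "norm l" "norm m" u v] assms \<open>u \<ge> 0\<close> \<open>v \<ge> 0\<close> sum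
    by (simp add: u_def v_def)
  show "c * norm (B x) = norm m powr (q / p) * dual_pair y0 l"
    using lp_norm2_Holder_eq[of p q "norm m" "norm l" v u] assms \<open>u \<ge> 0\<close> \<open>v \<ge> 0\<close> sum
    by (simp add: u_def v_def lp_norm2_commute add.commute)
qed

lemma norming_normalize:
  assumes "x \<noteq> 0" "dual_pair x l = norm l * norm x"
  shows "norming ((1 / norm x) *\<^sub>R x) l"
  using assms by (simp add: norming_def dual_pair_def blinfun.scaleR_right)

lemma conjugate_weight_powr:
  fixes a b p q :: real
  assumes "a > 0" "a powr q + b powr q = 1"
  shows "(1 + b powr q / a powr q) powr (1 / p) = 1 / a powr (q / p)"
proof -
  have "1 + b powr q / a powr q = 1 / a powr q"
    using assms by (simp add: field_simps)
  then show ?thesis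
    using assms by (simp add: powr_divide powr_powr)
qed

lemma optimal_dual_zero_multiplier:
  fixes A :: "'x::real_normed_vector \<Rightarrow>\<^sub>L 'y::real_normed_vector"
    and B :: "'x \<Rightarrow>\<^sub>L 'z::real_normed_vector"
  assumes "p > 1" "q > 1" "1/p + 1/q = 1" "c > 0"
    and "adjoint_op A l + c *\<^sub>R adjoint_op B m = 0" "lp_norm2 q (norm l) (norm m) = 1"
    and "dual_pair y0 l = lp_norm2 p (norm (y0 - A x)) (c * norm (B x))"
    and "m = 0"
  shows "B x = 0" "norm (y0 - A x) = dual_pair y0 l"
proof -
  have "norm l = 1"
    using assms(2,6,8) by simp
  then show "B x = 0" "norm (y0 - A x) = dual_pair y0 l"
    using optimal_dual_alignment(3,4)[OF assms(1-7)] assms(2,4,8) by simp_all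
qed

lemma optimal_dual_norming:
  fixes A :: "'x::real_normed_vector \<Rightarrow>\<^sub>L 'y::real_normed_vector"
    and B :: "'x \<Rightarrow>\<^sub>L 'z::real_normed_vector"
  assumes "p > 1" "q > 1" "1/p + 1/q = 1" "c > 0"
    and "adjoint_op A l + c *\<^sub>R adjoint_op B m = 0" "lp_norm2 q (norm l) (norm m) = 1"
    and "dual_pair y0 l = lp_norm2 p (norm (y0 - A x)) (c * norm (B x))"
    and "dual_pair y0 l > 0" "l \<noteq> 0" "m \<noteq> 0"
  shows "y0 - A x \<noteq> 0" "B x \<noteq> 0"
    and "norming (((1 + norm m powr q / norm l powr q) powr (1 / p) / dual_pair y0 l)
      *\<^sub>R (y0 - A x)) l"
    and "norming ((- c * (1 + norm l powr q / norm m powr q) powr (1 / p) / dual_pair y0 l)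
      *\<^sub>R B x) m"
proof -
  note align = optimal_dual_alignment[OF assms(1-7)]
  have weights: "norm l powr q + norm m powr q = 1"
    using assms(2,6) lp_norm2_powr[of q "norm l" "norm m"] by simp
  have "norm (y0 - A x) > 0" "c * norm (B x) > 0"
    using align(3,4) assms(8-10) by simp_all
  then show "y0 - A x \<noteq> 0" "B x \<noteq> 0"
    by auto
  have "(1 + norm m powr q / norm l powr q) powr (1 / p) / dual_pair y0 l = 1 / norm (y0 - A x)"
    using conjugate_weight_powr[of "norm l" q "norm m" p] assms(9) weights align(3) by simp
  moreover have "norming ((1 / norm (y0 - A x)) *\<^sub>R (y0 - A x)) l"
    using \<open>norm (y0 - A x) > 0\<close> align(1) by (intro norming_normalize) (auto simp: dual_pair_def)
  ultimately show "norming (((1 + norm m powr q / norm l powr q) powr (1 / p) / dual_pair y0 l)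
      *\<^sub>R (y0 - A x)) l"
    by simp
  have "- c * (1 + norm l powr q / norm m powr q) powr (1 / p) / dual_pair y0 l = - (1 / norm (B x))"
    using conjugate_weight_powr[of "norm m" q "norm l" p] assms(4,10) weights
    by (simp add: add.commute flip: align(4))
  moreover have "norming ((1 / norm (- B x)) *\<^sub>R (- B x)) m"
    using \<open>c * norm (B x) > 0\<close> align(2) by (intro norming_normalize) (auto simp: dual_pair_def)
  ultimately show "norming ((- c * (1 + norm l powr q / norm m powr q) powr (1 / p) / dual_pair y0 l)
      *\<^sub>R B x) m"
    by simp
qed

theorem proposition3p5:
  fixes A :: "'x::banach \<Rightarrow>\<^sub>L 'y::banach"
    and B :: "'x \<Rightarrow>\<^sub>L 'z::banach"
    and y0 :: 'y and \<rho> p p' :: real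
    and xh :: 'x and lh :: "'y \<Rightarrow>\<^sub>L real" and mh :: "'z \<Rightarrow>\<^sub>L real"
  assumes rho: "\<rho> > 0"
    and p: "p > 1" and p': "p' > 1" and conj: "1 / p + 1 / p' = 1"
    and xh_min: "(norm (y0 - A xh) powr p + \<rho> * norm (B xh) powr p) powr (1 / p)
          = (INF x. (norm (y0 - A x) powr p + \<rho> * norm (B x) powr p) powr (1 / p))"
    and min_pos: "(INF x. (norm (y0 - A x) powr p + \<rho> * norm (B x) powr p) powr (1 / p)) > 0"
    and lm_norm: "(norm lh powr p' + norm mh powr p') powr (1 / p') = 1"
    and lm_constr: "adjoint_op A lh + \<rho> powr (1 / p) *\<^sub>R adjoint_op B mh = 0"
    and lm_max: "dual_pair y0 lh = Sup {\<bar>dual_pair y0 l\<bar> | l m.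
            (norm l powr p' + norm m powr p') powr (1 / p') \<le> 1 \<and>
            adjoint_op A l + \<rho> powr (1 / p) *\<^sub>R adjoint_op B m = 0}"
    and max_pos: "Sup {\<bar>dual_pair y0 l\<bar> | l m.
            (norm l powr p' + norm m powr p') powr (1 / p') \<le> 1 \<and>
            adjoint_op A l + \<rho> powr (1 / p) *\<^sub>R adjoint_op B m = 0} > 0"
  shows "(mh = 0 \<longrightarrow> B xh = 0 \<and> norm (y0 - A xh) = dual_pair y0 lh)
    \<and> (lh \<noteq> 0 \<and> mh \<noteq> 0 \<longrightarrow>
         (let \<alpha> = (1 + norm mh powr p' / norm lh powr p') powr (1 / p) / dual_pair y0 lh;
              \<beta> = - (\<rho> powr (1 / p)) * (1 + norm lh powr p' / norm mh powr p') powr (1 / p)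
                    / dual_pair y0 lh
          in y0 - A xh \<noteq> 0 \<and> B xh \<noteq> 0 \<and>
             norming (\<alpha> *\<^sub>R (y0 - A xh)) lh \<and> norming (\<beta> *\<^sub>R B xh) mh))"
proof -
  define c where "c = \<rho> powr (1 / p)"
  have "c > 0"
    using rho by (simp add: c_def)
  have objective: "(norm (y0 - A x) powr p + \<rho> * norm (B x) powr p) powr (1 / p)
      = lp_norm2 p (norm (y0 - A x)) (c * norm (B x))" for x
    using rho p by (simp add: lp_norm2_def c_def powr_mult powr_powr)
  have "dual_pair y0 lh = (INF x. lp_norm2 p (norm (y0 - A x)) (c * norm (B x)))"
    using lm_max Sup_dual_eq_Inf_primal[OF p p' conj less_imp_le[OF \<open>c > 0\<close>], of y0 A B]
    by (simp add: c_def lp_norm2_def)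
  then have opt: "dual_pair y0 lh = lp_norm2 p (norm (y0 - A xh)) (c * norm (B xh))"
    and "dual_pair y0 lh > 0"
    using xh_min min_pos by (simp_all add: objective)
  have "lp_norm2 p' (norm lh) (norm mh) = 1"
    using lm_norm by (simp add: lp_norm2_def)
  note optimal = p p' conj \<open>c > 0\<close> lm_constr[folded c_def] this opt
  (* max_pos is redundant: the dual supremum equals the primal infimum, which min_pos makes positive. *)
  show ?thesis
    using optimal_dual_zero_multiplier[OF optimal] optimal_dual_norming[OF optimal \<open>dual_pair y0 lh > 0\<close>]
    by (simp add: Let_def c_def)
qed

end
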